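(* Let $n\ge4$ and for $1\le p\le n$ let $K_p$ be the set of regular elements of $\mathcal{OCT}_n$ whose image has exactly $p$ elements. Then for all $1\le p\le n-2$, $\langle K_p\rangle\subseteq\langle K_{p+1}\rangle$, where $\langle A\rangle$ denotes the subsemigroup of $\mathcal{T}_n$ generated by $A$.
   Context: $\mathcal{T}_n$ is the full transformation semigroup on $[n]=\{1,\dots,n\}$ under composition. $\alpha$ is a contraction if $|x\alpha-y\alpha|\le|x-y|$ for all $x,y$, order-preserving if $x\le y\Rightarrow x\alpha\le y\alpha$. $\mathcal{OCT}_n$ is the semigroup of order-preserving contractions; $\alpha\in\mathcal{OCT}_n$ is regular if $\alpha\beta\alpha=\alpha$ for some $\beta\in\mathcal{OCT}_n$. *)

theory Defs
  imports Main
begin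

(* Transformations of [n] = {1..n} are represented as functions nat => nat that
   map {1..n} into {1..n} and act as the identity outside {1..n} (so that each
   transformation has a unique representative). *)
definition T :: "nat \<Rightarrow> (nat \<Rightarrow> nat) set" where
  "T n = {a. (\<forall>x\<in>{1..n}. a x \<in> {1..n}) \<and> (\<forall>x. x \<notin> {1..n} \<longrightarrow> a x = x)}"

(* Composition in the paper's right-action convention: x(a b) = (x a) b. *)
definition tcomp :: "(nat \<Rightarrow> nat) \<Rightarrow> (nat \<Rightarrow> nat) \<Rightarrow> (nat \<Rightarrow> nat)" where
  "tcomp a b = b \<circ> a"

definition order_preserving :: "nat \<Rightarrow> (nat \<Rightarrow> nat) \<Rightarrow> bool" where
  "order_preserving n a \<longleftrightarrow> (\<forall>x\<in>{1..n}. \<forall>y\<in>{1..n}. x \<le> y \<longrightarrow> a x \<le> a y)"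

definition contraction :: "nat \<Rightarrow> (nat \<Rightarrow> nat) \<Rightarrow> bool" where
  "contraction n a \<longleftrightarrow>
     (\<forall>x\<in>{1..n}. \<forall>y\<in>{1..n}. \<bar>int (a x) - int (a y)\<bar> \<le> \<bar>int x - int y\<bar>)"

definition OCT :: "nat \<Rightarrow> (nat \<Rightarrow> nat) set" where
  "OCT n = {a \<in> T n. order_preserving n a \<and> contraction n a}"

definition regular_OCT :: "nat \<Rightarrow> (nat \<Rightarrow> nat) \<Rightarrow> bool" where
  "regular_OCT n a \<longleftrightarrow> a \<in> OCT n \<and> (\<exists>b\<in>OCT n. tcomp (tcomp a b) a = a)"

definition K :: "nat \<Rightarrow> nat \<Rightarrow> (nat \<Rightarrow> nat) set" where
  "K n p = {a. regular_OCT n a \<and> card (a ` {1..n}) = p}"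

inductive_set gen :: "(nat \<Rightarrow> nat) set \<Rightarrow> (nat \<Rightarrow> nat) set" for A where
  base: "a \<in> A \<Longrightarrow> a \<in> gen A"
| comp: "a \<in> gen A \<Longrightarrow> b \<in> gen A \<Longrightarrow> tcomp a b \<in> gen A"

end

theory Submission
  imports Defs
begin

(* A regular element of OCT_n of rank p is a ramp: constant a up to some k, the translation
   x \<mapsto> x + a - k on the window [k, k+p-1], and constant a+p-1 beyond.  Indeed, if
   f g f = f then g maps the image of f injectively, hence by translation, back into [1,n],
   which pins down the window.  Composing two ramps clamps the image of the first to the
   window of the second, so a ramp of rank p is the product of two ramps of rank p+1 whose
   image and window are offset by one.  This needs room beside the window or the image; the
   two idempotent corner ramps lacking it are a neighbouring rank-p ramp times one more
   ramp of rank p+1. *)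

definition ramp :: "nat \<Rightarrow> nat \<Rightarrow> nat \<Rightarrow> nat \<Rightarrow> nat \<Rightarrow> nat" where
  "ramp n k a p x = (if x \<in> {1..n} then a + min (x - k) (p - 1) else x)"

lemma ramp_outside: "x \<notin> {1..n} \<Longrightarrow> ramp n k a p x = x"
  unfolding ramp_def by (rule if_not_P)

(* The window of the product is the preimage of the overlap of [a, a+p) with [k', k'+q). *)
lemma tcomp_ramp:
  assumes "1 \<le> p" "1 \<le> q" "1 \<le> a" "a + p - 1 \<le> n" "k' < a + p" "a < k' + q"
  shows "tcomp (ramp n k a p) (ramp n k' a' q) =
    ramp n (k + max a k' - a) (a' + max a k' - k') (min (a + p) (k' + q) - max a k')"
proof
  fix x
  show "tcomp (ramp n k a p) (ramp n k' a' q) x =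
    ramp n (k + max a k' - a) (a' + max a k' - k') (min (a + p) (k' + q) - max a k') x"
  proof (cases "x \<in> {1..n}")
    case x: True
    have "a + min (x - k) (p - 1) \<in> {1..n}"
      using assms by auto
    then have "tcomp (ramp n k a p) (ramp n k' a' q) x =
        a' + min (a + min (x - k) (p - 1) - k') (q - 1)"
      using x by (simp add: tcomp_def ramp_def)
    also have "\<dots> = ramp n (k + max a k' - a) (a' + max a k' - k')
        (min (a + p) (k' + q) - max a k') x"
    proof (cases "k' \<le> a")
      case True
      then have "a' + min (a + min (x - k) (p - 1) - k') (q - 1) =
          (a' + a - k') + min (x - k) (min (a + p) (k' + q) - a - 1)"
        using assms(1,6) by (simp add: min_def; arith)
      with True x show ?thesis
        by (simp add: ramp_def max_def)
    next
      case False
      then have "a' + min (a + min (x - k) (p - 1) - k') (q - 1) =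
          a' + min (x - (k + k' - a)) (min (a + p) (k' + q) - k' - 1)"
        using assms(2,5) by (simp add: min_def; arith)
      with False x show ?thesis
        by (simp add: ramp_def max_def)
    qed
    finally show ?thesis .
  next
    case False
    then show ?thesis
      by (simp add: tcomp_def ramp_outside)
  qed
qed

lemma ramp_in_OCT:
  assumes "1 \<le> p" "1 \<le> a" "a + p - 1 \<le> n"
  shows "ramp n k a p \<in> OCT n"
proof -
  have "ramp n k a p \<in> T n"
    using assms unfolding T_def ramp_def by auto
  moreover have "order_preserving n (ramp n k a p)"
    unfolding order_preserving_def ramp_def by (auto intro: min.mono diff_le_mono)
  moreover have "contraction n (ramp n k a p)"
    unfolding contraction_def ramp_def by (auto simp: min_def)
  ultimately show ?thesis
    unfolding OCT_def by blast
qed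

lemma ramp_image:
  assumes "1 \<le> p" "1 \<le> k" "k + p - 1 \<le> n"
  shows "ramp n k a p ` {1..n} = {a..a + p - 1}"
proof
  show "ramp n k a p ` {1..n} \<subseteq> {a..a + p - 1}"
    using assms by (auto simp: ramp_def)
  show "{a..a + p - 1} \<subseteq> ramp n k a p ` {1..n}"
  proof
    fix y
    assume "y \<in> {a..a + p - 1}"
    then have "k + (y - a) \<in> {1..n}" "ramp n k a p (k + (y - a)) = y"
      using assms by (auto simp: ramp_def)
    then show "y \<in> ramp n k a p ` {1..n}"
      by (metis image_eqI)
  qed
qed

lemma ramp_in_K:
  assumes "1 \<le> p" "1 \<le> k" "k + p - 1 \<le> n" "1 \<le> a" "a + p - 1 \<le> n"
  shows "ramp n k a p \<in> K n p"
proof -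
  have "tcomp (tcomp (ramp n k a p) (ramp n a k p)) (ramp n k a p) = ramp n k a p"
    using assms by (simp add: tcomp_ramp)
  moreover have "ramp n k a p \<in> OCT n" "ramp n a k p \<in> OCT n"
    using assms by (simp_all add: ramp_in_OCT)
  ultimately show ?thesis
    using assms ramp_image[OF assms(1-3)] unfolding K_def regular_OCT_def by auto
qed

lemma OCT_maps_to:
  assumes "f \<in> OCT n" "x \<in> {1..n}"
  shows "f x \<in> {1..n}"
  using assms unfolding OCT_def T_def by blast

lemma OCT_outside:
  assumes "f \<in> OCT n" "x \<notin> {1..n}"
  shows "f x = x"
  using assms unfolding OCT_def T_def by blast

lemma OCT_mono:
  assumes "f \<in> OCT n" "x \<in> {1..n}" "y \<in> {1..n}" "x \<le> y"
  shows "f x \<le> f y"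
  using assms unfolding OCT_def order_preserving_def by blast

lemma OCT_diff_le:
  assumes "f \<in> OCT n" "x \<in> {1..n}" "y \<in> {1..n}" "x \<le> y"
  shows "f y - f x \<le> y - x"
proof -
  have "\<bar>int (f y) - int (f x)\<bar> \<le> \<bar>int y - int x\<bar>"
    using assms unfolding OCT_def contraction_def by blast
  then show ?thesis
    using OCT_mono[OF assms] assms(4) by linarith
qed

lemma OCT_image:
  assumes "f \<in> OCT n" "1 \<le> n"
  shows "f ` {1..n} = {f 1..f n}"
proof
  show "f ` {1..n} \<subseteq> {f 1..f n}"
    using OCT_mono[OF assms(1)] assms(2) by force
  have "{f 1..f m} \<subseteq> f ` {1..m}" if "1 \<le> m" "m \<le> n" for m
    using that
  proof (induction m rule: nat_induct_at_least)
    case base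
    then show ?case by simp
  next
    case (Suc m)
    have "f (Suc m) - f m \<le> 1"
      using OCT_diff_le[OF assms(1), of m "Suc m"] Suc.hyps Suc.prems by simp
    then have "{f 1..f (Suc m)} \<subseteq> {f 1..f m} \<union> {f (Suc m)}"
      by auto
    also have "\<dots> \<subseteq> f ` {1..Suc m}"
      using Suc by auto
    finally show ?case .
  qed
  then show "{f 1..f n} \<subseteq> f ` {1..n}"
    using assms(2) by blast
qed

lemma OCT_inj_on_translation:
  assumes "g \<in> OCT n" "inj_on g {a..b}" "1 \<le> a" "b \<le> n" "a + i \<le> b"
  shows "g (a + i) = g a + i"
  using assms(5)
proof (induction i)
  case 0
  then show ?case by simp
next
  case (Suc i)
  have range: "a + i \<in> {1..n}" "a + Suc i \<in> {1..n}"
    using Suc.prems assms(3,4) by auto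
  have "g (a + i) \<le> g (a + Suc i)"
    using OCT_mono[OF assms(1) range] by simp
  moreover have "g (a + Suc i) - g (a + i) \<le> 1"
    using OCT_diff_le[OF assms(1) range] by simp
  moreover have "g (a + Suc i) \<noteq> g (a + i)"
    using inj_onD[OF assms(2)] Suc.prems by fastforce
  ultimately show ?case
    using Suc by simp
qed

lemma OCT_eq_rampI:
  assumes "f \<in> OCT n" "1 \<le> p" "1 \<le> k" "k + p - 1 \<le> n"
    and "f k = f 1" "f (k + p - 1) = f n" "f n = f 1 + (p - 1)"
  shows "f = ramp n k (f 1) p"
proof
  fix x
  show "f x = ramp n k (f 1) p x"
  proof (cases "x \<in> {1..n}")
    case x: True
    have ends: "1 \<in> {1..n}" "k \<in> {1..n}" "k + p - 1 \<in> {1..n}" "n \<in> {1..n}"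
      using assms(2-4) by auto
    consider "x \<le> k" | "k \<le> x" "x \<le> k + p - 1" | "k + p - 1 \<le> x"
      by linarith
    then show ?thesis
    proof cases
      case 1
      then have "f 1 \<le> f x" "f x \<le> f k"
        using OCT_mono[OF assms(1)] x ends by auto
      then show ?thesis
        using 1 x assms(5) by (simp add: ramp_def)
    next
      case 2
      then have "f k \<le> f x" "f x - f k \<le> x - k" "f (k + p - 1) - f x \<le> k + p - 1 - x"
        using OCT_mono[OF assms(1) ends(2) x] OCT_diff_le[OF assms(1) ends(2) x]
          OCT_diff_le[OF assms(1) x ends(3)] by auto
      then have "f x = f 1 + (x - k)"
        using 2 assms(2,5,6,7) by linarith
      moreover have "min (x - k) (p - 1) = x - k"
        using 2 by simp
      ultimately show ?thesis
        using x by (simp add: ramp_def)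
    next
      case 3
      then have "f (k + p - 1) \<le> f x" "f x \<le> f n"
        using OCT_mono[OF assms(1) ends(3) x] OCT_mono[OF assms(1) x ends(4)] x by auto
      moreover have "min (x - k) (p - 1) = p - 1"
        using 3 assms(2) by simp
      ultimately show ?thesis
        using x assms(6,7) by (simp add: ramp_def)
    qed
  qed (simp add: OCT_outside[OF assms(1)] ramp_outside)
qed

lemma K_rampE:
  assumes "f \<in> K n p" "1 \<le> p"
  obtains k a where "1 \<le> k" "k + p - 1 \<le> n" "1 \<le> a" "a + p - 1 \<le> n" "f = ramp n k a p"
proof -
  obtain g where f: "f \<in> OCT n" and g: "g \<in> OCT n" and fgf: "tcomp (tcomp f g) f = f"
    and card: "card (f ` {1..n}) = p"
    using assms(1) unfolding K_def regular_OCT_def by blast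
  have n: "1 \<le> n"
    using card assms(2) by (cases n) auto
  have image: "f ` {1..n} = {f 1..f n}"
    using OCT_image[OF f n] .
  have fn: "f n = f 1 + (p - 1)"
    using card image assms(2) by simp
  have ends: "f 1 \<in> {1..n}" "f n \<in> {1..n}"
    using OCT_maps_to[OF f] n by auto
  have inverse: "f (g y) = y" if "y \<in> {f 1..f n}" for y
    using fgf that image unfolding tcomp_def by (metis comp_apply imageE)
  have "inj_on g {f 1..f n}"
    using inverse by (rule inj_on_inverseI)
  then have shift: "g (f n) = g (f 1) + (p - 1)"
    using OCT_inj_on_translation[OF g, of "f 1" "f n" "p - 1"] ends fn by simp
  define k where "k = g (f 1)"
  have k: "1 \<le> k" "k + p - 1 \<le> n"
    using OCT_maps_to[OF g ends(1)] OCT_maps_to[OF g ends(2)] shift unfolding k_def by auto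
  have "k + p - 1 = g (f n)"
    using shift assms(2) unfolding k_def by simp
  then have "f k = f 1" "f (k + p - 1) = f n"
    using inverse fn unfolding k_def by auto
  then have "f = ramp n k (f 1) p"
    using OCT_eq_rampI[OF f assms(2) k] fn by blast
  then show ?thesis
    using that k ends fn by auto
qed

lemma ramp_in_gen_K_Suc:
  assumes "1 \<le> p" "p + 2 \<le> n" "1 \<le> k" "k + p - 1 \<le> n" "1 \<le> a" "a + p - 1 \<le> n"
  shows "ramp n k a p \<in> gen (K n (p + 1))"
proof -
  have wide: "ramp n k' a' (p + 1) \<in> gen (K n (p + 1))"
    if "1 \<le> k'" "k' + p \<le> n" "1 \<le> a'" "a' + p \<le> n" for k' a'
    using that by (intro gen.base ramp_in_K) auto
  have product: "ramp n k' a' p \<in> gen (K n (p + 1))"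
    if "1 \<le> k'" "k' + p - 1 \<le> n" "1 \<le> a'" "a' + p - 1 \<le> n"
      and "k' + p \<le> n \<and> 2 \<le> a' \<or> 2 \<le> k' \<and> a' + p \<le> n" for k' a'
    using that(5)
  proof
    assume room: "k' + p \<le> n \<and> 2 \<le> a'"
    have "tcomp (ramp n k' 2 (p + 1)) (ramp n 1 (a' - 1) (p + 1)) = ramp n k' a' p"
      using that assms(1,2) room by (simp add: tcomp_ramp)
    moreover have "ramp n k' 2 (p + 1) \<in> gen (K n (p + 1))"
        "ramp n 1 (a' - 1) (p + 1) \<in> gen (K n (p + 1))"
      using wide that assms(2) room by auto
    ultimately show ?thesis
      by (metis gen.comp)
  next
    assume room: "2 \<le> k' \<and> a' + p \<le> n"
    have "tcomp (ramp n (k' - 1) 1 (p + 1)) (ramp n 2 a' (p + 1)) = ramp n k' a' p"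
      using that assms(1,2) room by (simp add: tcomp_ramp)
    moreover have "ramp n (k' - 1) 1 (p + 1) \<in> gen (K n (p + 1))"
        "ramp n 2 a' (p + 1) \<in> gen (K n (p + 1))"
      using wide that assms(2) room by auto
    ultimately show ?thesis
      by (metis gen.comp)
  qed
  consider "k + p \<le> n \<and> 2 \<le> a \<or> 2 \<le> k \<and> a + p \<le> n" | "k = 1" "a = 1"
    | "k = n - p + 1" "a = n - p + 1"
    using assms by linarith
  then show ?thesis
  proof cases
    case 1
    then show ?thesis
      using product assms by blast
  next
    case 2
    have "tcomp (ramp n 1 2 p) (ramp n 2 1 (p + 1)) = ramp n 1 1 p"
      using assms(1,2) by (simp add: tcomp_ramp)
    moreover have "ramp n 1 2 p \<in> gen (K n (p + 1))" "ramp n 2 1 (p + 1) \<in> gen (K n (p + 1))"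
      using product wide assms(1,2) by auto
    ultimately show ?thesis
      using 2 by (metis gen.comp)
  next
    case 3
    have "tcomp (ramp n (n - p + 1) (n - p) p) (ramp n (n - p - 1) (n - p) (p + 1)) =
        ramp n (n - p + 1) (n - p + 1) p"
      using assms(1,2) by (simp add: tcomp_ramp Suc_diff_le)
    moreover have "ramp n (n - p + 1) (n - p) p \<in> gen (K n (p + 1))"
        "ramp n (n - p - 1) (n - p) (p + 1) \<in> gen (K n (p + 1))"
      using product wide assms(1,2) by auto
    ultimately show ?thesis
      using 3 by (metis gen.comp)
  qed
qed

lemma gen_minimal:
  assumes "A \<subseteq> gen B"
  shows "gen A \<subseteq> gen B"
proof
  fix x
  assume "x \<in> gen A"
  then show "x \<in> gen B"
    by induction (use assms in \<open>auto intro: gen.comp\<close>)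
qed

theorem proposition9:
  fixes n p :: nat
  assumes "n \<ge> 4" and "1 \<le> p" and "p \<le> n - 2"
  shows "gen (K n p) \<subseteq> gen (K n (p + 1))"
proof (rule gen_minimal, rule subsetI)
  fix f
  assume "f \<in> K n p"
  then obtain k a where "1 \<le> k" "k + p - 1 \<le> n" "1 \<le> a" "a + p - 1 \<le> n" "f = ramp n k a p"
    using assms(2) by (rule K_rampE)
  then show "f \<in> gen (K n (p + 1))"
    using ramp_in_gen_K_Suc assms by simp
qed

end
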